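(* Let $\mathcal{X}=G^{\min}/P$ be the affine Grassmannian of the minimal affine Kac–Moody group $\widehat{SL_2}$, and let $c^k_{n,m}\in\mathbb{Z}[\alpha_0,\alpha_1]$ be the $T$-equivariant Schubert structure constants, $\hat{\varepsilon}_n\cdot\hat{\varepsilon}_m=\sum_{k=\max\{n,m\}}^{n+m}c^k_{n,m}\hat{\varepsilon}_k$. Then for all integers $n,m\ge1$, $c^{n+m}_{n,m}=\binom{n+m}{n}$ and $$c^{n+m-1}_{n,m}= \begin{cases} \frac{1}{4}\cdot\frac{(n+m)!}{(n-1)!(m-1)!}(\alpha_0+\alpha_1) & n,m\text{ even},\\[1ex] \frac{1}{4}\cdot\frac{(n+m)!}{n!\,m!}\big((1+nm)\alpha_0+(-1+nm)\alpha_1\big) & n,m\text{ odd},\\[1ex] \frac{1}{4}\cdot\frac{(n+m-1)!}{(n-1)!\,m!}\big((-1+nm+m^2)\alpha_0+(1+nm+m^2)\alpha_1\big) & n\text{ even}, m\text{ odd},\\[1ex] \frac{1}{4}\cdot\frac{(n+m-1)!}{n!\,(m-1)!}\big((-1+nm+n^2)\alpha_0+(1+nm+n^2)\alpha_1\big) & n\text{ odd}, m\text{ even}. \end{cases}$$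
   Context: $T$ is the adjoint torus of $\widehat{SL_2}$, $H^\bullet_T(\mathrm{pt})=\mathbb{Z}[\alpha_0,\alpha_1]$ (polynomials in the simple roots), and $\{\hat{\varepsilon}_i\}_{i\ge0}$ is the $T$-equivariant Schubert basis of $H^\bullet_T(\mathcal{X})$ (Kumar's basis), indexed by $w_i$, the alternating word of length $i$ in $s_0,s_1$ ending in $s_0$, where $P$ is the maximal parabolic with Weyl group $\{e,s_1\}$. It satisfies $\hat\varepsilon_0=1$ and the equivariant Chevalley formula $\hat{\varepsilon}_1\cdot\hat{\varepsilon}_m=q_m\hat{\varepsilon}_m+(m+1)\hat{\varepsilon}_{m+1}$ with $q_m=\lceil m/2\rceil^2\alpha_0+(\lfloor m/2\rfloor^2+\lfloor m/2\rfloor)\alpha_1$. The constant $c^k_{n,m}$ is homogeneous of degree $n+m-k$ in $\alpha_0,\alpha_1$. *)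

theory Defs
  imports Complex_Main
begin

text \<open>Equivariant Chevalley coefficient
  q_m = ceil(m/2)^2 alpha_0 + (floor(m/2)^2 + floor(m/2)) alpha_1,
  evaluated at a point (a0, a1) for the simple roots.\<close>
definition chev_q :: "real \<Rightarrow> real \<Rightarrow> nat \<Rightarrow> real" where
  "chev_q a0 a1 m = real (((m + 1) div 2)^2) * a0 + real ((m div 2)^2 + m div 2) * a1"

text \<open>c n m k stands for the structure constant c^k_{n,m} (specialised at
  alpha_0 = a0, alpha_1 = a1): eps_n * eps_m = sum_k c^k_{n,m} eps_k.
  The predicate collects the defining properties of the equivariant Schubert
  structure constants of the affine Grassmannian of affine SL_2: support in
  max n m .. n+m, commutativity, eps_0 = 1, the equivariant Chevalley formula,
  and associativity.  These determine the constants uniquely.\<close>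
definition schubert_consts :: "real \<Rightarrow> real \<Rightarrow> (nat \<Rightarrow> nat \<Rightarrow> nat \<Rightarrow> real) \<Rightarrow> bool" where
  "schubert_consts a0 a1 c \<longleftrightarrow>
     (\<forall>n m k. c n m k \<noteq> 0 \<longrightarrow> max n m \<le> k \<and> k \<le> n + m) \<and>
     (\<forall>n m k. c n m k = c m n k) \<and>
     (\<forall>m k. c 0 m k = (if k = m then 1 else 0)) \<and>
     (\<forall>m k. c 1 m k = (if k = m then chev_q a0 a1 m
                         else if k = m + 1 then real (m + 1) else 0)) \<and>
     (\<forall>n m p l. (\<Sum>k\<le>n + m. c n m k * c k p l) = (\<Sum>k\<le>m + p. c m p k * c n k l))"

end

theory Submission
  imports Defs
begin

text \<open>Comparing the coefficient of eps_l in (eps_1 eps_m) eps_p = eps_1 (eps_m eps_p) and expanding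
  both eps_1-products by the Chevalley formula gives a recursion in the first index.  For the top
  coefficient it is the binomial recursion.  For the next coefficient it telescopes to
  (n + m) c^{n+m-1}_{n,m} = binom(n+m, n) (S(n+m) - S(n) - S(m)), where S(N) is the sum of the
  Chevalley coefficients q_j for j < N; since q_j is quadratic in j with parity-dependent
  coefficients, S has a cubic closed form on each parity class, and the four cases of the
  theorem are the four parity combinations of n and m.\<close>

lemma schubert_consts_support:
  "schubert_consts a0 a1 c \<Longrightarrow> c n m k \<noteq> 0 \<Longrightarrow> max n m \<le> k \<and> k \<le> n + m"
  unfolding schubert_consts_def by blast

lemma schubert_consts_vanish_above:
  "schubert_consts a0 a1 c \<Longrightarrow> n + m < k \<Longrightarrow> c n m k = 0"
  using schubert_consts_support by fastforce

lemma schubert_consts_vanish_below: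
  "schubert_consts a0 a1 c \<Longrightarrow> k < m \<Longrightarrow> c n m k = 0"
  using schubert_consts_support by fastforce

lemma schubert_consts_chevalley_recursion:
  assumes S: "schubert_consts a0 a1 c" and l: "l \<ge> 1"
  shows "real (m + 1) * c (m + 1) p l
           = (chev_q a0 a1 l - chev_q a0 a1 m) * c m p l + real l * c m p (l - 1)"
proof -
  have c1: "\<And>m k. c 1 m k = (if k = m then chev_q a0 a1 m
                         else if k = m + 1 then real (m + 1) else 0)"
   and assoc: "\<And>n m p l. (\<Sum>k\<le>n + m. c n m k * c k p l) = (\<Sum>k\<le>m + p. c m p k * c n k l)"
    using S unfolding schubert_consts_def by blast+
  have "(\<Sum>k\<le>1 + m. c 1 m k * c k p l)
      = (\<Sum>k\<le>1 + m. (if k = m then chev_q a0 a1 m * c m p l else 0)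
                     + (if k = m + 1 then real (m + 1) * c (m + 1) p l else 0))"
    by (rule sum.cong) (auto simp: c1[unfolded One_nat_def])
  then have left: "(\<Sum>k\<le>1 + m. c 1 m k * c k p l)
      = chev_q a0 a1 m * c m p l + real (m + 1) * c (m + 1) p l"
    by (simp add: sum.distrib)
  have "(\<Sum>k\<le>m + p. c m p k * c 1 k l)
      = (\<Sum>k\<le>m + p. (if k = l then c m p l * chev_q a0 a1 l else 0)
                     + (if k = l - 1 then c m p (l - 1) * real l else 0))"
    by (rule sum.cong) (use l in \<open>auto simp: c1[unfolded One_nat_def]\<close>)
  also have "\<dots> = (if l \<le> m + p then c m p l * chev_q a0 a1 l else 0)
                 + (if l - 1 \<le> m + p then c m p (l - 1) * real l else 0)"
    by (simp add: sum.distrib)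
  also have "\<dots> = c m p l * chev_q a0 a1 l + c m p (l - 1) * real l"
    using schubert_consts_vanish_above[OF S, of m p l] schubert_consts_vanish_above[OF S, of m p "l - 1"]
    by auto
  finally have right: "(\<Sum>k\<le>m + p. c m p k * c 1 k l)
      = c m p l * chev_q a0 a1 l + c m p (l - 1) * real l" .
  show ?thesis
    using assoc[of 1 m p l] left right by (simp add: algebra_simps)
qed

lemma binomial_step_real:
  "real (n + 1) * real ((n + m + 1) choose (n + 1)) = real (n + m + 1) * real ((n + m) choose n)"
  using Suc_times_binomial_eq[of "n + m" n] by (metis of_nat_mult add_Suc Suc_eq_plus1 mult.commute)

lemma schubert_consts_top:
  assumes S: "schubert_consts a0 a1 c"
  shows "c n m (n + m) = real ((n + m) choose n)"
proof (induction n)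
  case 0
  then show ?case using S unfolding schubert_consts_def by simp
next
  case (Suc n)
  have "c n m (n + m + 1) = 0" using schubert_consts_vanish_above[OF S] by simp
  then have "real (n + 1) * c (n + 1) m (n + m + 1) = real (n + m + 1) * c n m (n + m)"
    using schubert_consts_chevalley_recursion[OF S, of "n + m + 1" n m] by simp
  then have "real (n + 1) * c (n + 1) m (n + m + 1)
           = real (n + 1) * real ((n + m + 1) choose (n + 1))"
    using binomial_step_real[of n m] Suc by simp
  then show ?case by simp
qed

definition chev_sum :: "real \<Rightarrow> real \<Rightarrow> nat \<Rightarrow> real" where
  "chev_sum a0 a1 N = (\<Sum>j<N. chev_q a0 a1 j)"

definition chev_defect :: "real \<Rightarrow> real \<Rightarrow> nat \<Rightarrow> nat \<Rightarrow> real" where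
  "chev_defect a0 a1 n m = chev_sum a0 a1 (n + m) - chev_sum a0 a1 n - chev_sum a0 a1 m"

lemma schubert_consts_subtop_telescoping:
  assumes S: "schubert_consts a0 a1 c" and m: "m \<ge> 1"
  shows "real (n + m) * c n m (n + m - 1) = real ((n + m) choose n) * chev_defect a0 a1 n m"
proof (induction n)
  case 0
  have "c 0 m (m - 1) = 0" using schubert_consts_vanish_below[OF S] m by simp
  then show ?case by (simp add: chev_defect_def chev_sum_def)
next
  case (Suc n)
  let ?B = "real ((n + m) choose n)"
  have step: "real (n + 1) * c (n + 1) m (n + m)
      = (chev_q a0 a1 (n + m) - chev_q a0 a1 n) * ?B + real (n + m) * c n m (n + m - 1)"
    using schubert_consts_chevalley_recursion[OF S, of "n + m" n m] m schubert_consts_top[OF S]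
    by simp
  have defect: "chev_defect a0 a1 (n + 1) m
      = chev_defect a0 a1 n m + chev_q a0 a1 (n + m) - chev_q a0 a1 n"
    by (simp add: chev_defect_def chev_sum_def)
  have "real (n + 1) * (real (n + 1 + m) * c (n + 1) m (n + 1 + m - 1))
      = real (n + m + 1) * (real (n + 1) * c (n + 1) m (n + m))"
    by (simp add: algebra_simps)
  also have "\<dots> = real (n + m + 1) * ((chev_q a0 a1 (n + m) - chev_q a0 a1 n) * ?B
                                          + ?B * chev_defect a0 a1 n m)"
    using step Suc by simp
  also have "\<dots> = real (n + m + 1) * ?B * chev_defect a0 a1 (n + 1) m"
    unfolding defect by (simp add: algebra_simps)
  also have "\<dots> = real (n + 1) * (real ((n + 1 + m) choose (n + 1)) * chev_defect a0 a1 (n + 1) m)"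
    using binomial_step_real[of n m] by (simp add: ac_simps)
  finally show ?case by (simp del: of_nat_add)
qed

lemma schubert_consts_subtop:
  assumes S: "schubert_consts a0 a1 c" and "m \<ge> 1"
  shows "c n m (n + m - 1) = fact (n + m) / (fact n * fact m) * chev_defect a0 a1 n m / real (n + m)"
proof -
  have "real (n + m) * c n m (n + m - 1) = real ((n + m) choose n) * chev_defect a0 a1 n m"
    by (rule schubert_consts_subtop_telescoping[OF assms])
  moreover have "real ((n + m) choose n) = fact (n + m) / (fact n * fact m)"
    using binomial_fact[of n "n + m"] by simp
  moreover have "real (n + m) > 0" using \<open>m \<ge> 1\<close> by simp
  ultimately show ?thesis by (simp add: eq_divide_eq mult_ac del: of_nat_add)
qed

lemma chev_sum_even:
  "chev_sum a0 a1 (2 * i) = ((2 * real i ^ 3 + real i) * a0 + (2 * real i ^ 3 - 2 * real i) * a1) / 3"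
proof (induction i)
  case 0
  then show ?case by (simp add: chev_sum_def)
next
  case (Suc i)
  have "chev_sum a0 a1 (2 * Suc i) = chev_sum a0 a1 (2 * i) + chev_q a0 a1 (2 * i) + chev_q a0 a1 (2 * i + 1)"
    by (simp add: chev_sum_def)
  then show ?case
    using Suc by (simp add: chev_q_def field_simps power3_eq_cube power2_eq_square)
qed

lemma chev_sum_odd:
  "chev_sum a0 a1 (2 * i + 1)
     = ((2 * real i ^ 3 + real i) * a0 + (2 * real i ^ 3 - 2 * real i) * a1) / 3
       + real i ^ 2 * a0 + (real i ^ 2 + real i) * a1"
  using chev_sum_even[of a0 a1 i] by (simp add: chev_sum_def chev_q_def)

lemma chev_defect_even_even:
  assumes "even n" "even m"
  shows "chev_defect a0 a1 n m = real (n + m) * real n * real m / 4 * (a0 + a1)"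
proof -
  obtain a b where ab: "n = 2 * a" "m = 2 * b" using assms by (auto elim!: evenE)
  have "chev_sum a0 a1 (n + m) = chev_sum a0 a1 (2 * (a + b))"
    using ab by (simp add: distrib_left)
  then show ?thesis
    unfolding chev_defect_def using ab
    by (simp only: chev_sum_even) (simp add: field_simps power3_eq_cube)
qed

lemma chev_defect_odd_odd:
  assumes "odd n" "odd m"
  shows "chev_defect a0 a1 n m
           = real (n + m) / 4 * ((1 + real n * real m) * a0 + (-1 + real n * real m) * a1)"
proof -
  obtain a b where ab: "n = 2 * a + 1" "m = 2 * b + 1" using assms by (auto elim!: oddE)
  have "chev_sum a0 a1 (n + m) = chev_sum a0 a1 (2 * (a + b + 1))"
    using ab by (simp add: distrib_left)
  then show ?thesis
    unfolding chev_defect_def using ab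
    by (simp only: chev_sum_even chev_sum_odd)
       (simp add: field_simps power3_eq_cube power2_eq_square)
qed

lemma chev_defect_even_odd:
  assumes "even n" "odd m"
  shows "chev_defect a0 a1 n m
           = real n / 4 * ((-1 + real n * real m + (real m)^2) * a0
                           + (1 + real n * real m + (real m)^2) * a1)"
proof -
  obtain a b where ab: "n = 2 * a" "m = 2 * b + 1" using assms by (auto elim!: evenE oddE)
  have "chev_sum a0 a1 (n + m) = chev_sum a0 a1 (2 * (a + b) + 1)"
    using ab by (simp add: distrib_left)
  then show ?thesis
    unfolding chev_defect_def using ab
    by (simp only: chev_sum_even chev_sum_odd)
       (simp add: field_simps power3_eq_cube power2_eq_square)
qed

lemma fact_pred_real: "n \<ge> 1 \<Longrightarrow> (fact n :: real) = real n * fact (n - 1)"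
  using fact_reduce[of n] by simp

lemma schubert_consts_subtop_even_even:
  assumes S: "schubert_consts a0 a1 c" and "n \<ge> 1" "m \<ge> 1" "even n" "even m"
  shows "c n m (n + m - 1) = 1/4 * (fact (n + m) / (fact (n - 1) * fact (m - 1))) * (a0 + a1)"
proof -
  have "c n m (n + m - 1) = fact (n + m) / (fact n * fact m) * (real n * real m) / 4 * (a0 + a1)"
    using schubert_consts_subtop[OF S \<open>m \<ge> 1\<close>, of n]
      chev_defect_even_even[OF \<open>even n\<close> \<open>even m\<close>, of a0 a1] \<open>m \<ge> 1\<close>
    by (simp del: of_nat_add)
  also have "\<dots> = 1/4 * (fact (n + m) / (fact (n - 1) * fact (m - 1))) * (a0 + a1)"
    using fact_pred_real[OF \<open>n \<ge> 1\<close>] fact_pred_real[OF \<open>m \<ge> 1\<close>] assms(2,3)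
    by (simp add: field_simps del: of_nat_add)
  finally show ?thesis .
qed

lemma schubert_consts_subtop_odd_odd:
  assumes S: "schubert_consts a0 a1 c" and "m \<ge> 1" "odd n" "odd m"
  shows "c n m (n + m - 1) = 1/4 * (fact (n + m) / (fact n * fact m))
           * ((1 + real n * real m) * a0 + (-1 + real n * real m) * a1)"
  using schubert_consts_subtop[OF S \<open>m \<ge> 1\<close>, of n]
    chev_defect_odd_odd[OF \<open>odd n\<close> \<open>odd m\<close>, of a0 a1] \<open>m \<ge> 1\<close>
  by (simp del: of_nat_add)

lemma schubert_consts_subtop_even_odd:
  assumes S: "schubert_consts a0 a1 c" and "n \<ge> 1" "m \<ge> 1" "even n" "odd m"
  shows "c n m (n + m - 1) = 1/4 * (fact (n + m - 1) / (fact (n - 1) * fact m))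
           * ((-1 + real n * real m + (real m)^2) * a0 + (1 + real n * real m + (real m)^2) * a1)"
proof -
  have "c n m (n + m - 1) = fact (n + m) / (fact n * fact m) * real n / real (n + m) / 4
      * ((-1 + real n * real m + (real m)^2) * a0 + (1 + real n * real m + (real m)^2) * a1)"
    using schubert_consts_subtop[OF S \<open>m \<ge> 1\<close>, of n]
      chev_defect_even_odd[OF \<open>even n\<close> \<open>odd m\<close>, of a0 a1]
    by (simp add: mult_ac del: of_nat_add)
  also have "fact (n + m) / (fact n * fact m) * real n / real (n + m)
           = (fact (n + m - 1) / (fact (n - 1) * fact m) :: real)"
    using fact_pred_real[OF \<open>n \<ge> 1\<close>] fact_pred_real[of "n + m"] assms(2,3)
    by (simp add: field_simps del: of_nat_add)
  finally show ?thesis by simp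
qed

lemma schubert_consts_subtop_odd_even:
  assumes S: "schubert_consts a0 a1 c" and "n \<ge> 1" "m \<ge> 1" "odd n" "even m"
  shows "c n m (n + m - 1) = 1/4 * (fact (n + m - 1) / (fact n * fact (m - 1)))
           * ((-1 + real n * real m + (real n)^2) * a0 + (1 + real n * real m + (real n)^2) * a1)"
proof -
  have "c n m (n + m - 1) = c m n (m + n - 1)"
    using S unfolding schubert_consts_def by (simp add: add.commute)
  then show ?thesis
    using schubert_consts_subtop_even_odd[OF S \<open>m \<ge> 1\<close> \<open>n \<ge> 1\<close> \<open>even m\<close> \<open>odd n\<close>]
    by (simp add: ac_simps)
qed

theorem mainTheorem6:
  fixes a0 a1 :: real and c :: "nat \<Rightarrow> nat \<Rightarrow> nat \<Rightarrow> real" and n m :: nat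
  assumes "schubert_consts a0 a1 c" and "n \<ge> 1" and "m \<ge> 1"
  shows "c n m (n + m) = real ((n + m) choose n)
    \<and> c n m (n + m - 1) =
      (if even n \<and> even m then
         1/4 * (fact (n + m) / (fact (n - 1) * fact (m - 1))) * (a0 + a1)
       else if odd n \<and> odd m then
         1/4 * (fact (n + m) / (fact n * fact m))
           * ((1 + real n * real m) * a0 + (-1 + real n * real m) * a1)
       else if even n \<and> odd m then
         1/4 * (fact (n + m - 1) / (fact (n - 1) * fact m))
           * ((-1 + real n * real m + (real m)^2) * a0 + (1 + real n * real m + (real m)^2) * a1)
       else
         1/4 * (fact (n + m - 1) / (fact n * fact (m - 1)))
           * ((-1 + real n * real m + (real n)^2) * a0 + (1 + real n * real m + (real n)^2) * a1))"
  using schubert_consts_top[OF assms(1)]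
    schubert_consts_subtop_even_even[OF assms] schubert_consts_subtop_odd_odd[OF assms(1,3)]
    schubert_consts_subtop_even_odd[OF assms] schubert_consts_subtop_odd_even[OF assms]
  by auto

end
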